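(* Let $R$ be a commutative Noetherian ring, $N$ an $R$-module, $M$ a primeful $R$-module having at least one prime submodule, $X=\mathrm{Spec}(M)$, $K\le M$, and $U=X\setminus V(K)$. Then for each $\gamma=(\gamma_{\mathfrak p})_{\mathfrak p\in\mathrm{Supp}(U)}\in\mathcal{A}(N,M)(U)$ there exist $r\in\mathbb{N}$, elements $s_1,\dots,s_r\in (K:M)$ and $m_1,\dots,m_r\in N$ such that $U=\bigcup_{i=1}^r X_{s_i}$ and, for each $i=1,\dots,r$ and each $P\in X_{s_i}$, $\gamma_{(P:M)}=m_i/s_i$ in $N_{(P:M)}$.
   Context: For a submodule $L$ of an $R$-module $M$, $(L:M)=\{r\in R\mid rM\subseteq L\}$. A submodule $P$ of $M$ is prime if $P\neq M$ and whenever $rm\in P$ ($r\in R$, $m\in M$) then $r\in (P:M)$ or $m\in P$. $\mathrm{Spec}(M)$ is the set of prime submodules. $M$ is primeful if $M=0$ or the map $\mathrm{Spec}(M)\to\mathrm{Spec}(R/\mathrm{Ann}(M))$, $P\mapsto (P:M)/\mathrm{Ann}(M)$, is surjective. For $L\le M$, $V(L)=\{P\in X\mid (P:M)\supseteq (L:M)\}$; these are the closed sets of the Zariski topology on $X$. For $r\in R$, $X_r=X\setminus V(rM)$. For open $U\subseteq X$, $\mathrm{Supp}(U)=\{(P:M)\mid P\in U\}$. $\mathcal{A}(N,M)(U)$ is the set of families $(\gamma_{\mathfrak p})_{\mathfrak p\in\mathrm{Supp}(U)}\in\prod_{\mathfrak p\in\mathrm{Supp}(U)}N_{\mathfrak p}$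 such that for each $Q\in U$ there exist an open neighbourhood $W\subseteq U$ of $Q$ and $s\in R$, $m\in N$ with $s\notin (P:M)$ and $\gamma_{(P:M)}=m/s\in N_{(P:M)}$ for every $P\in W$. *)

theory Defs
  imports Complex_Main
begin

text \<open>Conventions: the commutative ring R is a whole type 'r::comm_ring_1; an R-module is
a type 'b::ab_group_add with a scalar multiplication satisfying the axioms of the library
locale module (HOL.Modules); submodules are module.subspace.\<close>

definition ring_ideal :: "'r::comm_ring_1 set \<Rightarrow> bool" where
  "ring_ideal I \<longleftrightarrow> 0 \<in> I \<and> (\<forall>a\<in>I. \<forall>b\<in>I. a + b \<in> I) \<and> (\<forall>r. \<forall>a\<in>I. r * a \<in> I)"

definition prime_ideal :: "'r::comm_ring_1 set \<Rightarrow> bool" where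
  "prime_ideal p \<longleftrightarrow> ring_ideal p \<and> p \<noteq> UNIV \<and> (\<forall>a b. a * b \<in> p \<longrightarrow> a \<in> p \<or> b \<in> p)"

definition noetherian_ring :: "'r::comm_ring_1 itself \<Rightarrow> bool" where
  "noetherian_ring _ \<longleftrightarrow> (\<forall>I::'r set. ring_ideal I \<longrightarrow>
      (\<exists>F. finite F \<and> F \<subseteq> I \<and> I = {\<Sum>a\<in>F. c a * a | c. True}))"

definition colon :: "('r::comm_ring_1 \<Rightarrow> 'm::ab_group_add \<Rightarrow> 'm) \<Rightarrow> 'm set \<Rightarrow> 'r set" where
  "colon sc L = {r. \<forall>x. sc r x \<in> L}"

definition Ann :: "('r::comm_ring_1 \<Rightarrow> 'm::ab_group_add \<Rightarrow> 'm) \<Rightarrow> 'r set" where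
  "Ann sc = colon sc {0}"

definition prime_submodule :: "('r::comm_ring_1 \<Rightarrow> 'm::ab_group_add \<Rightarrow> 'm) \<Rightarrow> 'm set \<Rightarrow> bool" where
  "prime_submodule sc P \<longleftrightarrow> module.subspace sc P \<and> P \<noteq> UNIV \<and>
     (\<forall>r x. sc r x \<in> P \<longrightarrow> r \<in> colon sc P \<or> x \<in> P)"

definition Spec_mod :: "('r::comm_ring_1 \<Rightarrow> 'm::ab_group_add \<Rightarrow> 'm) \<Rightarrow> 'm set set" where
  "Spec_mod sc = {P. prime_submodule sc P}"

text \<open>Primeful: M = 0 or P \<mapsto> (P:M)/Ann(M) from Spec(M) to Spec(R/Ann(M)) is surjective.
 Prime ideals of R/Ann(M) are identified with prime ideals of R containing Ann(M),
 p/Ann(M) \<leftrightarrow> p, so surjectivity says every such p equals (P:M) for some prime P.\<close>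
definition primeful :: "('r::comm_ring_1 \<Rightarrow> 'm::ab_group_add \<Rightarrow> 'm) \<Rightarrow> bool" where
  "primeful sc \<longleftrightarrow> (UNIV::'m set) = {0} \<or>
     (\<forall>p. prime_ideal p \<and> Ann sc \<subseteq> p \<longrightarrow> (\<exists>P\<in>Spec_mod sc. colon sc P = p))"

definition Vset :: "('r::comm_ring_1 \<Rightarrow> 'm::ab_group_add \<Rightarrow> 'm) \<Rightarrow> 'm set \<Rightarrow> 'm set set" where
  "Vset sc L = {P \<in> Spec_mod sc. colon sc L \<subseteq> colon sc P}"

definition zar_open :: "('r::comm_ring_1 \<Rightarrow> 'm::ab_group_add \<Rightarrow> 'm) \<Rightarrow> 'm set set \<Rightarrow> bool" where
  "zar_open sc W \<longleftrightarrow> (\<exists>L. module.subspace sc L \<and> W = Spec_mod sc - Vset sc L)"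

definition Xbasic :: "('r::comm_ring_1 \<Rightarrow> 'm::ab_group_add \<Rightarrow> 'm) \<Rightarrow> 'r \<Rightarrow> 'm set set" where
  "Xbasic sc r = Spec_mod sc - Vset sc (range (sc r))"

definition Supp :: "('r::comm_ring_1 \<Rightarrow> 'm::ab_group_add \<Rightarrow> 'm) \<Rightarrow> 'm set set \<Rightarrow> 'r set set" where
  "Supp sc U = (\<lambda>P. colon sc P) ` U"

text \<open>Localization N_p: the fraction n/s (s \<notin> p) is the equivalence class of (n,s)
 under (n,s) ~ (n',s') iff u(s' n - s n') = 0 for some u \<notin> p.\<close>
definition mfrac :: "('r::comm_ring_1 \<Rightarrow> 'n::ab_group_add \<Rightarrow> 'n) \<Rightarrow> 'r set \<Rightarrow> 'n \<Rightarrow> 'r \<Rightarrow> ('n \<times> 'r) set" where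
  "mfrac scN p n s = {(n', s'). s' \<notin> p \<and> (\<exists>u. u \<notin> p \<and> scN u (scN s' n - scN s n') = 0)}"

definition loc :: "('r::comm_ring_1 \<Rightarrow> 'n::ab_group_add \<Rightarrow> 'n) \<Rightarrow> 'r set \<Rightarrow> ('n \<times> 'r) set set" where
  "loc scN p = {mfrac scN p n s | n s. s \<notin> p}"

definition sections ::
  "('r::comm_ring_1 \<Rightarrow> 'n::ab_group_add \<Rightarrow> 'n) \<Rightarrow> ('r \<Rightarrow> 'm::ab_group_add \<Rightarrow> 'm) \<Rightarrow> 'm set set
    \<Rightarrow> ('r set \<Rightarrow> ('n \<times> 'r) set) set" where
  "sections scN scM U = {\<gamma>. (\<forall>p\<in>Supp scM U. \<gamma> p \<in> loc scN p) \<and>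
     (\<forall>Q\<in>U. \<exists>W. zar_open scM W \<and> Q \<in> W \<and> W \<subseteq> U \<and>
        (\<exists>s n. \<forall>P\<in>W. s \<notin> colon scM P \<and> \<gamma> (colon scM P) = mfrac scN (colon scM P) n s))}"

end

theory Submission
  imports Defs
begin

text \<open>Every point Q of U has a basic neighbourhood X_h with h \<in> (K:M) and X_h \<subseteq> U on which
\<gamma> is a single fraction n/h: inside the given neighbourhood W = X \ V(L) take h = k l s with
k \<in> (K:M), l \<in> (L:M) and s the given denominator, all outside (Q:M), and rewrite n/s as
(k l n)/h. Since P \<in> X_h iff h \<notin> (P:M) and every (P:M) is an ideal, X_a is covered by
X_t, t \<in> T, whenever a lies in the ideal generated by T; as R is Noetherian, the ideal generated
by all these h is generated by finitely many of them, which gives the finite subcover.\<close>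

interpretation rmod: module "(*) :: 'a::comm_ring_1 \<Rightarrow> 'a \<Rightarrow> 'a"
  by unfold_locales (auto simp: algebra_simps)

lemma ring_ideal_iff_subspace: "ring_ideal I \<longleftrightarrow> rmod.subspace I"
  unfolding ring_ideal_def rmod.subspace_def by blast

lemma span_finite_subset:
  assumes "x \<in> rmod.span S"
  obtains T where "finite T" "T \<subseteq> S" "x \<in> rmod.span T"
proof -
  from assms obtain T r where "x = (\<Sum>a\<in>T. r a * a)" "finite T" "T \<subseteq> S"
    unfolding rmod.span_explicit by blast
  then have "x \<in> rmod.span T" unfolding rmod.span_explicit by blast
  with \<open>finite T\<close> \<open>T \<subseteq> S\<close> show thesis by (rule that)
qed

lemma noetherian_ideal_finitely_generated:
  assumes "noetherian_ring TYPE('r::comm_ring_1)" "ring_ideal (I :: 'r set)"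
  obtains F where "finite F" "rmod.span F = I"
proof -
  obtain F where F: "finite F" "I = {\<Sum>a\<in>F. c a * a | c. True}"
    using assms unfolding noetherian_ring_def by blast
  have "rmod.span F = I" unfolding F(2) rmod.span_finite[OF F(1)] by auto
  with F(1) show thesis by (rule that)
qed

lemma noetherian_finite_spanning_subset:
  fixes S :: "'r::comm_ring_1 set"
  assumes "noetherian_ring TYPE('r)"
  obtains T where "finite T" "T \<subseteq> S" "S \<subseteq> rmod.span T"
proof -
  have "ring_ideal (rmod.span S)" by (simp add: ring_ideal_iff_subspace)
  then obtain F where F: "finite F" "rmod.span F = rmod.span S"
    by (rule noetherian_ideal_finitely_generated[OF assms])
  have "\<exists>T. finite T \<and> T \<subseteq> S \<and> a \<in> rmod.span T" if "a \<in> F" for a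
  proof -
    have "a \<in> rmod.span S" using that F(2) rmod.span_superset by blast
    then show ?thesis by (blast elim: span_finite_subset)
  qed
  then obtain Tf where Tf: "\<And>a. a \<in> F \<Longrightarrow> finite (Tf a) \<and> Tf a \<subseteq> S \<and> a \<in> rmod.span (Tf a)"
    by metis
  define T where "T = (\<Union>a\<in>F. Tf a)"
  have "F \<subseteq> rmod.span T"
    unfolding T_def using Tf rmod.span_mono[of _ "\<Union>a\<in>F. Tf a"] by blast
  then have "rmod.span F \<subseteq> rmod.span T"
    by (simp add: rmod.span_minimal)
  then have "S \<subseteq> rmod.span T"
    using F(2) rmod.span_superset[of S] by blast
  moreover have "finite T" "T \<subseteq> S" unfolding T_def using Tf F(1) by auto
  ultimately show thesis using that by blast
qed

lemma colon_mult:
  assumes "module sc" "a \<in> colon sc P"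
  shows "a * b \<in> colon sc P" "b * a \<in> colon sc P"
  using assms by (simp_all add: colon_def module.scale_scale[symmetric] mult.commute)

lemma colon_subspace:
  assumes "module sc" "module.subspace sc P"
  shows "rmod.subspace (colon sc P)"
proof (rule rmod.subspaceI)
  show "0 \<in> colon sc P"
    using module.subspace_0[OF assms] by (simp add: colon_def module.scale_zero_left[OF assms(1)])
  show "x + y \<in> colon sc P" if "x \<in> colon sc P" "y \<in> colon sc P" for x y
    using that module.subspace_add[OF assms]
    by (simp add: colon_def module.scale_left_distrib[OF assms(1)])
  show "c * x \<in> colon sc P" if "x \<in> colon sc P" for c x
    using colon_mult[OF assms(1) that] by simp
qed

lemma colon_prime_submodule_mult:
  assumes "module sc" "P \<in> Spec_mod sc" "a \<notin> colon sc P" "b \<notin> colon sc P"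
  shows "a * b \<notin> colon sc P"
proof
  assume "a * b \<in> colon sc P"
  then have "sc a (sc b x) \<in> P" for x
    by (simp add: colon_def module.scale_scale[OF assms(1)])
  then have "sc b x \<in> P" for x
    using assms(2,3) unfolding Spec_mod_def prime_submodule_def by blast
  then show False using assms(4) unfolding colon_def by blast
qed

lemma colon_range_scale_subset_iff:
  "colon sc (range (sc r)) \<subseteq> colon sc P \<longleftrightarrow> r \<in> colon sc P"
proof
  have "r \<in> colon sc (range (sc r))" unfolding colon_def by simp
  then show "r \<in> colon sc P" if "colon sc (range (sc r)) \<subseteq> colon sc P"
    using that by (rule subsetD[rotated])
  show "colon sc (range (sc r)) \<subseteq> colon sc P" if r: "r \<in> colon sc P"
  proof
    fix a assume a: "a \<in> colon sc (range (sc r))"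
    have "sc a x \<in> P" for x
    proof -
      obtain y where "sc a x = sc r y" using a unfolding colon_def by blast
      then show ?thesis using r unfolding colon_def by simp
    qed
    then show "a \<in> colon sc P" unfolding colon_def by simp
  qed
qed

lemma mem_Xbasic_iff: "P \<in> Xbasic sc r \<longleftrightarrow> P \<in> Spec_mod sc \<and> r \<notin> colon sc P"
  unfolding Xbasic_def Vset_def colon_range_scale_subset_iff by blast

lemma Xbasic_mult_subset:
  assumes "module sc"
  shows "Xbasic sc (a * b) \<subseteq> Xbasic sc a"
  using colon_mult(1)[OF assms] by (auto simp: mem_Xbasic_iff)

lemma Xbasic_subset_Vset_compl:
  assumes "l \<in> colon sc L"
  shows "Xbasic sc l \<subseteq> Spec_mod sc - Vset sc L"
  using assms by (auto simp: mem_Xbasic_iff Vset_def)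

lemma Xbasic_span_subset:
  assumes "module sc" "a \<in> rmod.span T"
  shows "Xbasic sc a \<subseteq> (\<Union>t\<in>T. Xbasic sc t)"
proof
  fix P assume "P \<in> Xbasic sc a"
  then have P: "P \<in> Spec_mod sc" "a \<notin> colon sc P" by (simp_all add: mem_Xbasic_iff)
  have "rmod.subspace (colon sc P)"
    using colon_subspace[OF assms(1)] P(1) unfolding Spec_mod_def prime_submodule_def by blast
  then have "\<not> T \<subseteq> colon sc P"
    using rmod.span_minimal assms(2) P(2) by blast
  then show "P \<in> (\<Union>t\<in>T. Xbasic sc t)" using P(1) by (auto simp: mem_Xbasic_iff)
qed

lemma Xbasic_finite_subcover:
  assumes "noetherian_ring TYPE('r::comm_ring_1)" "module (sc :: 'r \<Rightarrow> 'm::ab_group_add \<Rightarrow> 'm)"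
    and "\<And>Q. Q \<in> U \<Longrightarrow> Q \<in> Xbasic sc (h Q) \<and> Xbasic sc (h Q) \<subseteq> U"
  obtains G where "finite G" "G \<subseteq> U" "U = (\<Union>Q\<in>G. Xbasic sc (h Q))"
proof -
  obtain T where T: "finite T" "T \<subseteq> h ` U" "h ` U \<subseteq> rmod.span T"
    using noetherian_finite_spanning_subset[OF assms(1)] by blast
  obtain G where G: "G \<subseteq> U" "T = h ` G" "finite G"
    using finite_subset_image[OF T(1,2)] by blast
  have "U \<subseteq> (\<Union>Q\<in>U. Xbasic sc (h Q))" using assms(3) by blast
  also have "\<dots> \<subseteq> (\<Union>Q\<in>G. Xbasic sc (h Q))"
    using Xbasic_span_subset[OF assms(2)] T(3) G(2) by fastforce
  finally have "U = (\<Union>Q\<in>G. Xbasic sc (h Q))" using G(1) assms(3) by blast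
  with G(3,1) show thesis by (rule that)
qed

lemma mfrac_cancel:
  assumes N: "module scN" and t: "t \<notin> p"
    and p: "\<And>u v. u \<notin> p \<Longrightarrow> v \<notin> p \<Longrightarrow> u * v \<notin> p"
  shows "mfrac scN p (scN t n) (t * s) = mfrac scN p n s"
proof -
  have factor: "scN u (scN b (scN t n) - scN (t * s) a) = scN (u * t) (scN b n - scN s a)"
    for u b a
    by (simp add: module.scale_left_commute[OF N, of b t] module.scale_scale[OF N, symmetric]
        module.scale_right_diff_distrib[OF N])
  have "(\<exists>u. u \<notin> p \<and> scN (u * t) x = 0) \<longleftrightarrow> (\<exists>u. u \<notin> p \<and> scN u x = 0)" for x
  proof
    show "\<exists>u. u \<notin> p \<and> scN u x = 0" if "\<exists>u. u \<notin> p \<and> scN (u * t) x = 0"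
      using that p t by blast
    show "\<exists>u. u \<notin> p \<and> scN (u * t) x = 0" if "\<exists>u. u \<notin> p \<and> scN u x = 0"
      using that by (metis N module.scale_scale module.scale_zero_right mult.commute)
  qed
  then show ?thesis unfolding mfrac_def factor by simp
qed

lemma section_locally_basic:
  assumes N: "module scN" and M: "module scM"
    and U: "U = Spec_mod scM - Vset scM K"
    and \<gamma>: "\<gamma> \<in> sections scN scM U" and Q: "Q \<in> U"
  obtains h n where "h \<in> colon scM K" "Q \<in> Xbasic scM h" "Xbasic scM h \<subseteq> U"
    "\<And>P. P \<in> Xbasic scM h \<Longrightarrow> \<gamma> (colon scM P) = mfrac scN (colon scM P) n h"
proof -
  obtain W s n where W: "zar_open scM W" "Q \<in> W" "W \<subseteq> U"
    and frac: "\<forall>P\<in>W. s \<notin> colon scM P \<and> \<gamma> (colon scM P) = mfrac scN (colon scM P) n s"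
    using \<gamma> Q unfolding sections_def by blast
  obtain L where L: "W = Spec_mod scM - Vset scM L" using W(1) unfolding zar_open_def by blast
  have QS: "Q \<in> Spec_mod scM" using Q U by blast
  have "\<not> colon scM L \<subseteq> colon scM Q" using W(2) L QS unfolding Vset_def by blast
  then obtain l where l: "l \<in> colon scM L" "l \<notin> colon scM Q" by blast
  have "\<not> colon scM K \<subseteq> colon scM Q" using Q U QS unfolding Vset_def by blast
  then obtain k where k: "k \<in> colon scM K" "k \<notin> colon scM Q" by blast
  define t where "t = k * l"
  define h where "h = t * s"
  have hW: "Xbasic scM h \<subseteq> W"
  proof -
    have "h = l * (k * s)" unfolding h_def t_def by (simp only: ac_simps)
    then have "Xbasic scM h \<subseteq> Xbasic scM l" using Xbasic_mult_subset[OF M, of l "k * s"] by (simp only:)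
    also have "\<dots> \<subseteq> W" unfolding L by (rule Xbasic_subset_Vset_compl[OF l(1)])
    finally show ?thesis .
  qed
  have "h \<in> colon scM K"
    unfolding h_def t_def mult.assoc by (rule colon_mult(1)[OF M k(1)])
  moreover have "Q \<in> Xbasic scM h"
  proof -
    have "t \<notin> colon scM Q" unfolding t_def by (rule colon_prime_submodule_mult[OF M QS k(2) l(2)])
    moreover have "s \<notin> colon scM Q" using frac W(2) by blast
    ultimately show ?thesis
      unfolding h_def mem_Xbasic_iff using colon_prime_submodule_mult[OF M QS] QS by blast
  qed
  moreover have "Xbasic scM h \<subseteq> U" using hW W(3) by (rule order_trans)
  moreover have "\<gamma> (colon scM P) = mfrac scN (colon scM P) (scN t n) h"
    if P: "P \<in> Xbasic scM h" for P
  proof -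
    have PS: "P \<in> Spec_mod scM" using P by (simp add: mem_Xbasic_iff)
    have "P \<in> Xbasic scM t" using P Xbasic_mult_subset[OF M, of t s] unfolding h_def by blast
    then have "t \<notin> colon scM P" by (simp add: mem_Xbasic_iff)
    then have "mfrac scN (colon scM P) (scN t n) h = mfrac scN (colon scM P) n s"
      unfolding h_def by (rule mfrac_cancel[OF N]) (rule colon_prime_submodule_mult[OF M PS])
    moreover have "\<gamma> (colon scM P) = mfrac scN (colon scM P) n s" using frac hW P by blast
    ultimately show ?thesis by simp
  qed
  ultimately show thesis by (rule that)
qed

lemma finite_set_indexed_from_one:
  assumes "finite G"
  obtains f and r :: nat where "G = f ` {1..r}"
proof -
  obtain xs where xs: "set xs = G" using finite_list[OF assms] by blast
  have "G = (\<lambda>i. xs ! i) ` {..<length xs}"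
    unfolding xs[symmetric] by (auto simp: in_set_conv_nth)
  also have "\<dots> = (\<lambda>i. xs ! (i - 1)) ` Suc ` {..<length xs}"
    by (simp add: image_image)
  also have "\<dots> = (\<lambda>i. xs ! (i - 1)) ` {1..length xs}"
    by (simp only: image_Suc_lessThan)
  finally show thesis by (rule that)
qed

theorem lemma3p5:
  fixes scN :: "'r::comm_ring_1 \<Rightarrow> 'n::ab_group_add \<Rightarrow> 'n"
    and scM :: "'r \<Rightarrow> 'm::ab_group_add \<Rightarrow> 'm"
    and K :: "'m set" and U :: "'m set set" and \<gamma> :: "'r set \<Rightarrow> ('n \<times> 'r) set"
  assumes "noetherian_ring TYPE('r)"
    and "module scN" and "module scM"
    and "primeful scM" and "Spec_mod scM \<noteq> {}"
    and "module.subspace scM K"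
    and "U = Spec_mod scM - Vset scM K"
    and "\<gamma> \<in> sections scN scM U"
  shows "\<exists>(r::nat) (s::nat \<Rightarrow> 'r) (n::nat \<Rightarrow> 'n).
           (\<forall>i\<in>{1..r}. s i \<in> colon scM K) \<and>
           U = (\<Union>i\<in>{1..r}. Xbasic scM (s i)) \<and>
           (\<forall>i\<in>{1..r}. \<forall>P\<in>Xbasic scM (s i).
               \<gamma> (colon scM P) = mfrac scN (colon scM P) (n i) (s i))"
proof -
  have "\<forall>Q\<in>U. \<exists>h n. h \<in> colon scM K \<and> Q \<in> Xbasic scM h \<and> Xbasic scM h \<subseteq> U \<and>
          (\<forall>P\<in>Xbasic scM h. \<gamma> (colon scM P) = mfrac scN (colon scM P) n h)"
    using section_locally_basic[OF assms(2,3,7,8)] by (metis (no_types, lifting))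
  then obtain h nf where hn: "\<forall>Q\<in>U. h Q \<in> colon scM K \<and> Q \<in> Xbasic scM (h Q) \<and>
      Xbasic scM (h Q) \<subseteq> U \<and> (\<forall>P\<in>Xbasic scM (h Q). \<gamma> (colon scM P) = mfrac scN (colon scM P) (nf Q) (h Q))"
    by metis
  have "Q \<in> Xbasic scM (h Q) \<and> Xbasic scM (h Q) \<subseteq> U" if "Q \<in> U" for Q
    using hn that by simp
  then obtain G where G: "finite G" "G \<subseteq> U" "U = (\<Union>Q\<in>G. Xbasic scM (h Q))"
    by (rule Xbasic_finite_subcover[OF assms(1,3)])
  obtain f and r :: nat where Gf: "G = f ` {1..r}"
    by (rule finite_set_indexed_from_one[OF G(1)])
  have "f i \<in> U" if "i \<in> {1..r}" for i
    using G(2) that unfolding Gf by blast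
  then have "\<forall>i\<in>{1..r}. (h \<circ> f) i \<in> colon scM K"
    "\<forall>i\<in>{1..r}. \<forall>P\<in>Xbasic scM ((h \<circ> f) i).
       \<gamma> (colon scM P) = mfrac scN (colon scM P) ((nf \<circ> f) i) ((h \<circ> f) i)"
    using hn by simp_all
  moreover have "U = (\<Union>i\<in>{1..r}. Xbasic scM ((h \<circ> f) i))"
    using G(3) unfolding Gf SUP_image by (simp add: comp_def)
  ultimately show ?thesis by blast
qed

end
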